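(* Let $D$ be a squarefree integer and let $K$ be one of $\mathbb{R},\mathbb{Q}_2,\mathbb{Q}_3,\mathbb{Q}_5$. Then $C_D(K)\neq\emptyset$ if and only if $D$ is a square in $K$; explicitly, this means $D>0$, $D\equiv1\pmod 8$, $D\equiv 1\pmod 3$, $D\equiv\pm1\pmod 5$ for $K=\mathbb{R},\mathbb{Q}_2,\mathbb{Q}_3,\mathbb{Q}_5$ respectively.
   Context: $C_D\subset\mathbb{P}^4$ is the curve over $\mathbb{Q}$ given by $X_0^2-2X_1^2+X_2^2=0$, $X_1^2-2X_2^2+DX_3^2=0$, $X_2^2-2DX_3^2+X_4^2=0$. *)

theory Defs
  imports "HOL-Computational_Algebra.Computational_Algebra"
begin

definition CD_f1 :: "'a::comm_ring_1 \<Rightarrow> 'a \<Rightarrow> 'a \<Rightarrow> 'a \<Rightarrow> 'a \<Rightarrow> 'a \<Rightarrow> 'a" where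
  "CD_f1 D x0 x1 x2 x3 x4 = x0^2 - 2*x1^2 + x2^2"
definition CD_f2 :: "'a::comm_ring_1 \<Rightarrow> 'a \<Rightarrow> 'a \<Rightarrow> 'a \<Rightarrow> 'a \<Rightarrow> 'a \<Rightarrow> 'a" where
  "CD_f2 D x0 x1 x2 x3 x4 = x1^2 - 2*x2^2 + D*x3^2"
definition CD_f3 :: "'a::comm_ring_1 \<Rightarrow> 'a \<Rightarrow> 'a \<Rightarrow> 'a \<Rightarrow> 'a \<Rightarrow> 'a \<Rightarrow> 'a" where
  "CD_f3 D x0 x1 x2 x3 x4 = x2^2 - 2*D*x3^2 + x4^2"

definition CD_real_point :: "int \<Rightarrow> bool" where
  "CD_real_point D \<longleftrightarrow> (\<exists>x0 x1 x2 x3 x4 :: real.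
      (x0 \<noteq> 0 \<or> x1 \<noteq> 0 \<or> x2 \<noteq> 0 \<or> x3 \<noteq> 0 \<or> x4 \<noteq> 0) \<and>
      CD_f1 (of_int D) x0 x1 x2 x3 x4 = 0 \<and>
      CD_f2 (of_int D) x0 x1 x2 x3 x4 = 0 \<and>
      CD_f3 (of_int D) x0 x1 x2 x3 x4 = 0)"

text \<open>The p-adic integers Z_p as the inverse limit of Z/p^n Z: compatible sequences of
  residues x n in {0..<p^n}.\<close>
definition padic_ints :: "int \<Rightarrow> (nat \<Rightarrow> int) set" where
  "padic_ints p = {x. \<forall>n. 0 \<le> x n \<and> x n < p^n \<and> x (Suc n) mod p^n = x n}"

text \<open>C_D(Q_p) nonempty: every point of P^4(Q_p) has a primitive representative in Z_p
  (some coordinate a unit, i.e. nonzero mod p); the equations hold in Z_p iff they hold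
  modulo p^n at every level n.\<close>
definition CD_padic_point :: "int \<Rightarrow> int \<Rightarrow> bool" where
  "CD_padic_point p D \<longleftrightarrow> (\<exists>x0\<in>padic_ints p. \<exists>x1\<in>padic_ints p. \<exists>x2\<in>padic_ints p.
      \<exists>x3\<in>padic_ints p. \<exists>x4\<in>padic_ints p.
      (x0 1 \<noteq> 0 \<or> x1 1 \<noteq> 0 \<or> x2 1 \<noteq> 0 \<or> x3 1 \<noteq> 0 \<or> x4 1 \<noteq> 0) \<and>
      (\<forall>n. p^n dvd CD_f1 D (x0 n) (x1 n) (x2 n) (x3 n) (x4 n) \<and>
           p^n dvd CD_f2 D (x0 n) (x1 n) (x2 n) (x3 n) (x4 n) \<and>
           p^n dvd CD_f3 D (x0 n) (x1 n) (x2 n) (x3 n) (x4 n)))"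

text \<open>An integer D is a square in Q_p iff it is a square of a p-adic integer
  (a square root of an integer has nonnegative valuation).\<close>
definition padic_square :: "int \<Rightarrow> int \<Rightarrow> bool" where
  "padic_square p D \<longleftrightarrow> (\<exists>u\<in>padic_ints p. \<forall>n. p^n dvd (u n)^2 - D)"

definition real_square :: "int \<Rightarrow> bool" where
  "real_square D \<longleftrightarrow> (\<exists>r::real. r^2 = of_int D)"

end

theory Submission
  imports Defs
begin

text \<open>
  If \<open>s\<^sup>2 = D t\<^sup>2\<close> then \<open>(s : s : s : t : s)\<close> lies on \<open>C\<^sub>D\<close>, so a square root of \<open>D\<close>
  in \<open>K\<close> gives a point. Conversely, over \<open>\<real>\<close> the equation \<open>x\<^sub>2\<^sup>2 + x\<^sub>4\<^sup>2 = 2D x\<^sub>3\<^sup>2\<close> forces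
  \<open>D > 0\<close> unless the point vanishes. Over \<open>\<rat>\<^sub>p\<close> a point has a primitive integral
  representative. Squares take so few residues modulo 8, 3 and 5 that, unless \<open>D\<close> is a square
  residue, the equations modulo 8 force all coordinates to be even (\<open>p = 2\<close>), and modulo \<open>p\<close>
  force all coordinates but \<open>x\<^sub>3\<close> to be divisible by \<open>p\<close> (\<open>p = 3, 5\<close>); in the latter case
  the second equation modulo \<open>p\<^sup>2\<close> gives \<open>p\<^sup>2 | D\<close>, against squarefreeness. Hensel's lemma
  lifts square residues back to square roots in \<open>\<int>\<^sub>p\<close>.
\<close>

section \<open>p-adic integers as compatible residues\<close>

lemma padic_ints_mod_power:
  assumes "x \<in> padic_ints p" "m \<le> n"
  shows "x n mod p^m = x m"
  using assms(2)
proof (induction n rule: dec_induct)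
  case base
  from assms(1) have "0 \<le> x m" "x m < p^m" unfolding padic_ints_def by auto
  then show ?case by simp
next
  case (step n)
  have "p^m dvd p^n" using step(1) by (simp add: le_imp_power_dvd)
  then have "x (Suc n) mod p^m = (x (Suc n) mod p^n) mod p^m" by (simp add: mod_mod_cancel)
  also have "x (Suc n) mod p^n = x n" using assms(1) unfolding padic_ints_def by auto
  finally show ?case using step by simp
qed

lemma padic_ints_unit:
  assumes "x \<in> padic_ints p" "x 1 \<noteq> 0" "1 \<le> n"
  shows "\<not> p dvd x n"
  using padic_ints_mod_power[OF assms(1,3)] assms(2) by (simp add: dvd_eq_mod_eq_0)

lemma padic_ints_of_compatible:
  fixes p :: int and r :: "nat \<Rightarrow> int"
  assumes "p > 1" and "\<And>n. r (Suc n) mod p^n = r n mod p^n"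
  shows "(\<lambda>n. r n mod p^n) \<in> padic_ints p"
  unfolding padic_ints_def
proof safe
  fix n
  have "p^n > 0" using assms(1) by simp
  then show "0 \<le> r n mod p^n" "r n mod p^n < p^n" by simp_all
  have "p^n dvd p^Suc n" by (simp add: le_imp_power_dvd)
  then show "r (Suc n) mod p^Suc n mod p^n = r n mod p^n" using assms(2) by (simp add: mod_mod_cancel)
qed

lemma padic_squareI:
  fixes p D :: int and r :: "nat \<Rightarrow> int"
  assumes "p > 1" and root: "\<And>n. p^n dvd r n^2 - D" and "\<And>n. r (Suc n) mod p^n = r n mod p^n"
  shows "padic_square p D"
  unfolding padic_square_def
proof (intro bexI allI)
  fix n
  have "p^n dvd r n mod p^n - r n" using mod_eq_dvd_iff[of "r n mod p^n" "p^n" "r n"] by simp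
  moreover have "(r n mod p^n)^2 - D = (r n mod p^n - r n) * (r n mod p^n + r n) + (r n^2 - D)"
    by (simp add: algebra_simps power2_eq_square)
  ultimately show "p^n dvd (r n mod p^n)^2 - D" using root[of n] by (metis dvd_add dvd_mult2)
qed (use assms padic_ints_of_compatible in blast)

section \<open>Square roots by Hensel lifting\<close>

lemma hensel_step_odd:
  fixes p D x :: int
  assumes p: "prime p" "odd p" and "n > 0" and root: "p^n dvd x^2 - D" and unit: "\<not> p dvd x"
  shows "\<exists>y. p^Suc n dvd y^2 - D \<and> \<not> p dvd y \<and> y mod p^n = x mod p^n"
proof -
  obtain c where c: "x^2 - D = p^n * c" using root by (auto elim: dvdE)
  have "\<not> p dvd 2"
  proof
    assume "p dvd 2"
    then have "p \<le> 2" by (simp add: zdvd_imp_le)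
    then show False using p prime_gt_1_int[of p] by (cases "p = 2") auto
  qed
  then have "\<not> p dvd 2 * x" using p unit by (simp add: prime_dvd_mult_iff)
  then have "coprime p (2 * x)" using prime_imp_coprime[OF p(1)] by blast
  then have "gcd (2 * x) p = 1" by (simp add: coprime_iff_gcd_eq_1 gcd.commute)
  then obtain s t where st: "s * (2 * x) + t * p = 1" using bezout_int[of "2 * x" p] by auto
  \<comment> \<open>Newton's correction: \<open>s\<close> inverts the derivative \<open>2x\<close> modulo \<open>p\<close>.\<close>
  define y where "y = x - c * s * p^n"
  obtain k where k: "n = Suc k" using \<open>n > 0\<close> gr0_implies_Suc by blast
  have inverse: "2 * x * s = 1 - t * p" using st by (simp add: algebra_simps)
  have "y^2 - D = (x^2 - D) - (2 * x * s) * c * p^n + c^2 * s^2 * p^n * p^n"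
    by (simp add: y_def power2_eq_square algebra_simps)
  also have "\<dots> = p^n * c - (1 - t * p) * c * p^n + c^2 * s^2 * p^n * p^n"
    unfolding c inverse ..
  also have "\<dots> = p^Suc n * (c * t + c^2 * s^2 * p^k)"
    by (simp add: k algebra_simps)
  finally have "p^Suc n dvd y^2 - D" by simp
  moreover have "\<not> p dvd y"
  proof
    assume "p dvd y"
    moreover have "p dvd c * s * p^n" using k by simp
    ultimately have "p dvd y + c * s * p^n" by (rule dvd_add)
    then show False using unit by (simp add: y_def)
  qed
  moreover have "y mod p^n = x mod p^n" unfolding mod_eq_dvd_iff y_def by simp
  ultimately show ?thesis by blast
qed

lemma padic_square_odd_prime:
  fixes p D r :: int
  assumes p: "prime p" "odd p" and "p dvd r^2 - D" "\<not> p dvd r"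
  shows "padic_square p D"
proof -
  have "\<exists>f. \<forall>n. (p^n dvd f n^2 - D \<and> \<not> p dvd f n) \<and> f (Suc n) mod p^n = f n mod p^n"
  proof (rule dependent_nat_choice)
    fix x n assume x: "p^n dvd x^2 - D \<and> \<not> p dvd x"
    show "\<exists>y. (p^Suc n dvd y^2 - D \<and> \<not> p dvd y) \<and> y mod p^n = x mod p^n"
    proof (cases "n = 0")
      case True
      then show ?thesis using assms by (intro exI[of _ r]) simp
    next
      case False
      then show ?thesis using hensel_step_odd[OF p] x by blast
    qed
  qed (use assms in auto)
  then obtain f where "\<And>n. p^n dvd f n^2 - D" "\<And>n. f (Suc n) mod p^n = f n mod p^n" by blast
  then show ?thesis using padic_squareI[of p f D] p by (simp add: prime_gt_1_int)
qed

lemma square_mod_8: "(y::int)^2 mod 8 \<in> {0,1,4} \<and> (y^2 mod 8 = 1 \<longleftrightarrow> odd y)"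
proof -
  have "y mod 8 \<in> {0,1,2,3,4,5,6,7}" by auto
  moreover have "odd y \<longleftrightarrow> odd (y mod 8)" by presburger
  ultimately show ?thesis by (auto simp: power_mod[of y 8, symmetric])
qed

lemma square_mod_3: "(y::int)^2 mod 3 \<in> {0,1} \<and> (y^2 mod 3 = 0 \<longleftrightarrow> 3 dvd y)"
proof -
  have "y mod 3 \<in> {0,1,2}" by auto
  then show ?thesis by (auto simp: power_mod[of y 3, symmetric] dvd_eq_mod_eq_0)
qed

lemma square_mod_5: "(y::int)^2 mod 5 \<in> {0,1,4} \<and> (y^2 mod 5 = 0 \<longleftrightarrow> 5 dvd y)"
proof -
  have "y mod 5 \<in> {0,1,2,3,4}" by auto
  then show ?thesis by (auto simp: power_mod[of y 5, symmetric] dvd_eq_mod_eq_0)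
qed

lemma hensel_step_2:
  fixes D x :: int
  assumes D: "D mod 8 = 1" and root: "2^Suc n dvd x^2 - D" and "odd x"
  shows "\<exists>y. 2^Suc (Suc n) dvd y^2 - D \<and> odd y \<and> y mod 2^n = x mod 2^n"
proof (cases "2^Suc (Suc n) dvd x^2 - D")
  case True
  then show ?thesis using \<open>odd x\<close> by blast
next
  case False
  \<comment> \<open>Here the correction is \<open>2\<^sup>n\<close>, which changes \<open>x\<^sup>2\<close> by \<open>2\<^sup>n\<^sup>+\<^sup>1 x\<close> modulo \<open>2\<^sup>n\<^sup>+\<^sup>2\<close> once \<open>n \<ge> 2\<close>.\<close>
  have "8 dvd x^2 - D" using square_mod_8[of x] \<open>odd x\<close> D by (simp add: mod_eq_dvd_iff[symmetric])
  have "n \<ge> 2"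
  proof (rule ccontr)
    assume "\<not> n \<ge> 2"
    then have "n = 0 \<or> n = 1" by auto
    then have "2^Suc (Suc n) dvd (8::int)" by auto
    then show False using False \<open>8 dvd x^2 - D\<close> dvd_trans by blast
  qed
  define m where "m = n - 2"
  have m: "n = Suc (Suc m)" using \<open>n \<ge> 2\<close> by (simp add: m_def)
  obtain c where c: "x^2 - D = 2^Suc n * c" using root by (auto elim: dvdE)
  have "odd c"
  proof
    assume "even c"
    then obtain e where "c = 2 * e" by blast
    then have "x^2 - D = 2^Suc (Suc n) * e" using c by simp
    then show False using False by simp
  qed
  then have "even (c + x)" using \<open>odd x\<close> by simp
  then obtain e where e: "c + x = 2 * e" by (rule evenE)
  define y where "y = x + 2^n"
  have "y^2 - D = (x^2 - D) + 2^Suc n * x + 2^n * 2^n"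
    by (simp add: y_def power2_eq_square algebra_simps)
  also have "\<dots> = 2^Suc n * (c + x) + 2^n * 2^n" unfolding c by (simp add: algebra_simps)
  also have "\<dots> = 2^Suc (Suc n) * (e + 2^m)" unfolding e m by (simp add: algebra_simps)
  finally have "2^Suc (Suc n) dvd y^2 - D" by simp
  moreover have "odd y" using \<open>odd x\<close> by (simp add: y_def m)
  moreover have "y mod 2^n = x mod 2^n" by (simp add: y_def)
  ultimately show ?thesis by blast
qed

lemma padic_square_2:
  fixes D :: int
  assumes D: "D mod 8 = 1"
  shows "padic_square 2 D"
proof -
  have "\<exists>f. \<forall>n. (2^Suc n dvd f n^2 - D \<and> odd (f n)) \<and> f (Suc n) mod 2^n = f n mod 2^n"
  proof (rule dependent_nat_choice)
    have "2 dvd 1 - D" using D by presburger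
    then show "\<exists>x. 2^Suc 0 dvd x^2 - D \<and> odd x" by (intro exI[of _ 1]) simp
  qed (use hensel_step_2[OF D] in blast)
  then obtain f where f: "\<And>n. 2^Suc n dvd f n^2 - D" "\<And>n. f (Suc n) mod 2^n = f n mod 2^n"
    by blast
  have "(2::int)^n dvd f n^2 - D" for n
    using dvd_trans[OF _ f(1)[of n], of "2^n"] by (simp add: le_imp_power_dvd)
  then show ?thesis using padic_squareI[of 2 f D] f(2) by simp
qed

lemma squarefree_not_square_dvd:
  fixes D p :: int
  assumes "squarefree D" "p > 1"
  shows "\<not> p^2 dvd D"
  using assms by (auto dest: squarefreeD simp: zdvd1_eq)

lemma padic_square_unit_root:
  fixes p D :: int
  assumes "squarefree D" "prime p" "padic_square p D" "n \<ge> 2"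
  shows "\<exists>v. p^n dvd v^2 - D \<and> \<not> p dvd v"
proof -
  obtain u where u: "p^n dvd u n^2 - D" using assms(3) unfolding padic_square_def by blast
  have "\<not> p dvd u n"
  proof
    assume "p dvd u n"
    then have "p^2 dvd u n^2" by (simp add: dvd_power_same)
    moreover have "p^2 dvd u n^2 - D"
      using u le_imp_power_dvd[OF assms(4)] dvd_trans by blast
    ultimately have "p^2 dvd u n^2 - (u n^2 - D)" by (rule dvd_diff)
    then show False using squarefree_not_square_dvd[OF assms(1)] assms(2) prime_gt_1_int by auto
  qed
  with u show ?thesis by blast
qed

lemma padic_square_2_iff:
  fixes D :: int
  assumes "squarefree D"
  shows "padic_square 2 D \<longleftrightarrow> D mod 8 = 1"
proof
  assume "padic_square 2 D"
  then obtain v where v: "2^3 dvd v^2 - D" "odd v"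
    using padic_square_unit_root[OF assms, of 2 3] by auto
  then have "D mod 8 = v^2 mod 8" by (simp add: mod_eq_dvd_iff dvd_diff_commute)
  then show "D mod 8 = 1" using square_mod_8[of v] v(2) by simp
qed (rule padic_square_2)

lemma padic_square_3_iff:
  fixes D :: int
  assumes "squarefree D"
  shows "padic_square 3 D \<longleftrightarrow> D mod 3 = 1"
proof
  assume "padic_square 3 D"
  then obtain v where v: "3^2 dvd v^2 - D" "\<not> 3 dvd v"
    using padic_square_unit_root[OF assms, of 3 2] by auto
  then have "3 dvd v^2 - D" by (metis dvd_trans dvd_triv_left power2_eq_square)
  then have "D mod 3 = v^2 mod 3" by (simp add: mod_eq_dvd_iff dvd_diff_commute)
  then show "D mod 3 = 1" using square_mod_3[of v] v(2) by auto
next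
  assume "D mod 3 = 1"
  then have "3 dvd 1 - D" by presburger
  then show "padic_square 3 D" by (intro padic_square_odd_prime[of 3 1]) auto
qed

lemma padic_square_5_iff:
  fixes D :: int
  assumes "squarefree D"
  shows "padic_square 5 D \<longleftrightarrow> D mod 5 = 1 \<or> D mod 5 = 4"
proof
  assume "padic_square 5 D"
  then obtain v where v: "5^2 dvd v^2 - D" "\<not> 5 dvd v"
    using padic_square_unit_root[OF assms, of 5 2] by auto
  then have "5 dvd v^2 - D" by (metis dvd_trans dvd_triv_left power2_eq_square)
  then have "D mod 5 = v^2 mod 5" by (simp add: mod_eq_dvd_iff dvd_diff_commute)
  then show "D mod 5 = 1 \<or> D mod 5 = 4" using square_mod_5[of v] v(2) by auto
next
  assume "D mod 5 = 1 \<or> D mod 5 = 4"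
  then have "5 dvd 1 - D \<or> 5 dvd 4 - D" by presburger
  then show "padic_square 5 D"
    using padic_square_odd_prime[of 5 1 D] padic_square_odd_prime[of 5 2 D] by auto
qed

section \<open>Points of \<open>C\<^sub>D\<close>\<close>

lemma CD_forms_at_diagonal:
  fixes D s t :: "'a::comm_ring_1"
  shows "CD_f1 D s s s t s = 0" "CD_f2 D s s s t s = D * t^2 - s^2"
    "CD_f3 D s s s t s = 2 * (s^2 - D * t^2)"
  by (simp_all add: CD_f1_def CD_f2_def CD_f3_def algebra_simps)

lemma CD_real_point_iff:
  fixes D :: int
  assumes "D \<noteq> 0"
  shows "CD_real_point D \<longleftrightarrow> D > 0"
proof
  assume "CD_real_point D"
  then obtain x0 x1 x2 x3 x4 :: real
    where nonzero: "x0 \<noteq> 0 \<or> x1 \<noteq> 0 \<or> x2 \<noteq> 0 \<or> x3 \<noteq> 0 \<or> x4 \<noteq> 0"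
      and f1: "x0^2 - 2 * x1^2 + x2^2 = 0" and f2: "x1^2 - 2 * x2^2 + real_of_int D * x3^2 = 0"
      and f3: "x2^2 - 2 * real_of_int D * x3^2 + x4^2 = 0"
    unfolding CD_real_point_def CD_f1_def CD_f2_def CD_f3_def by blast
  show "D > 0"
  proof (rule ccontr)
    assume "\<not> D > 0"
    then have "real_of_int D < 0" using assms by simp
    then have "real_of_int D * x3^2 \<le> 0" by (simp add: mult_nonpos_nonneg)
    then have "x2^2 = 0" "x4^2 = 0" "real_of_int D * x3^2 = 0"
      using f3 zero_le_power2[of x2] zero_le_power2[of x4] by linarith+
    then have "x2 = 0" "x4 = 0" "x3 = 0" using \<open>real_of_int D < 0\<close> by simp_all
    moreover from this have "x1 = 0" using f2 by simp
    moreover from calculation have "x0 = 0" using f1 by simp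
    ultimately show False using nonzero by simp
  qed
next
  assume "D > 0"
  define s where "s = sqrt (real_of_int D)"
  have "s^2 = real_of_int D" using \<open>D > 0\<close> by (simp add: s_def)
  then have "CD_f1 (real_of_int D) s s s 1 s = 0" "CD_f2 (real_of_int D) s s s 1 s = 0"
    "CD_f3 (real_of_int D) s s s 1 s = 0"
    by (simp_all add: CD_forms_at_diagonal)
  then show "CD_real_point D" unfolding CD_real_point_def by (intro exI[of _ s] exI[of _ 1]) auto
qed

lemma real_square_iff:
  fixes D :: int
  assumes "D \<noteq> 0"
  shows "real_square D \<longleftrightarrow> D > 0"
proof
  assume "real_square D"
  then obtain r :: real where "r^2 = D" unfolding real_square_def by blast
  then have "real_of_int D \<ge> 0" by (metis zero_le_power2)
  then show "D > 0" using assms by simp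
next
  assume "D > 0"
  then have "(sqrt D)^2 = real_of_int D" by simp
  then show "real_square D" unfolding real_square_def by blast
qed

lemma CD_padic_point_if_padic_square:
  fixes p D :: int
  assumes "p > 1" and "padic_square p D"
  shows "CD_padic_point p D"
proof -
  obtain u where u: "u \<in> padic_ints p" "\<And>n. p^n dvd u n^2 - D"
    using assms(2) unfolding padic_square_def by blast
  define one where "one = (\<lambda>n::nat. 1 mod p^n)"
  have one: "one \<in> padic_ints p"
    using padic_ints_of_compatible[OF assms(1), of "\<lambda>_. 1"] by (simp add: one_def)
  have "one 1 \<noteq> 0" using assms(1) by (simp add: one_def)
  moreover have "p^n dvd CD_f1 D (u n) (u n) (u n) (one n) (u n) \<and>
      p^n dvd CD_f2 D (u n) (u n) (u n) (one n) (u n) \<and>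
      p^n dvd CD_f3 D (u n) (u n) (u n) (one n) (u n)" for n
  proof -
    have "p^n dvd one n - 1" using mod_eq_dvd_iff[of "1 mod p^n" "p^n" 1] by (simp add: one_def)
    moreover have "one n^2 - 1 = (one n - 1) * (one n + 1)" by (simp add: algebra_simps power2_eq_square)
    ultimately have one_sq: "p^n dvd one n^2 - 1" by simp
    have "D * one n^2 - u n^2 = D * (one n^2 - 1) - (u n^2 - D)"
      and "2 * (u n^2 - D * one n^2) = 2 * (u n^2 - D) - 2 * D * (one n^2 - 1)"
      by (simp_all add: algebra_simps)
    then show ?thesis unfolding CD_forms_at_diagonal
      by (simp only:) (intro conjI dvd_0_right dvd_diff dvd_mult one_sq u(2))
  qed
  ultimately show ?thesis unfolding CD_padic_point_def using u(1) one by blast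
qed

lemma CD_padic_point_primitive_solution:
  assumes "CD_padic_point p D" "k \<ge> 1"
  shows "\<exists>y0 y1 y2 y3 y4. p^k dvd CD_f1 D y0 y1 y2 y3 y4 \<and> p^k dvd CD_f2 D y0 y1 y2 y3 y4 \<and>
    p^k dvd CD_f3 D y0 y1 y2 y3 y4 \<and> \<not> (p dvd y0 \<and> p dvd y1 \<and> p dvd y2 \<and> p dvd y3 \<and> p dvd y4)"
proof -
  obtain x0 x1 x2 x3 x4 where
    x: "x0 \<in> padic_ints p" "x1 \<in> padic_ints p" "x2 \<in> padic_ints p" "x3 \<in> padic_ints p"
      "x4 \<in> padic_ints p"
    and primitive: "x0 1 \<noteq> 0 \<or> x1 1 \<noteq> 0 \<or> x2 1 \<noteq> 0 \<or> x3 1 \<noteq> 0 \<or> x4 1 \<noteq> 0"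
    and eqs: "\<forall>n. p^n dvd CD_f1 D (x0 n) (x1 n) (x2 n) (x3 n) (x4 n) \<and>
      p^n dvd CD_f2 D (x0 n) (x1 n) (x2 n) (x3 n) (x4 n) \<and>
      p^n dvd CD_f3 D (x0 n) (x1 n) (x2 n) (x3 n) (x4 n)"
    using assms(1) unfolding CD_padic_point_def by blast
  have "\<not> (p dvd x0 k \<and> p dvd x1 k \<and> p dvd x2 k \<and> p dvd x3 k \<and> p dvd x4 k)"
    using primitive padic_ints_unit[OF _ _ assms(2)] x by blast
  then show ?thesis using eqs by blast
qed

lemma CD_equations_mod:
  fixes D m :: int
  assumes "m dvd CD_f1 D y0 y1 y2 y3 y4" "m dvd CD_f2 D y0 y1 y2 y3 y4" "m dvd CD_f3 D y0 y1 y2 y3 y4"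
  shows "(y0^2 mod m - 2 * (y1^2 mod m) + y2^2 mod m) mod m = 0"
    and "(y1^2 mod m - 2 * (y2^2 mod m) + (D mod m) * (y3^2 mod m)) mod m = 0"
    and "(y2^2 mod m - 2 * (D mod m) * (y3^2 mod m) + y4^2 mod m) mod m = 0"
proof -
  have "CD_f1 D y0 y1 y2 y3 y4 mod m = (y0^2 mod m - 2 * (y1^2 mod m) + y2^2 mod m) mod m"
    unfolding CD_f1_def by (intro mod_add_cong mod_diff_cong mod_mult_cong) simp_all
  with assms(1) show "(y0^2 mod m - 2 * (y1^2 mod m) + y2^2 mod m) mod m = 0"
    by (metis dvd_eq_mod_eq_0)
  have "CD_f2 D y0 y1 y2 y3 y4 mod m = (y1^2 mod m - 2 * (y2^2 mod m) + (D mod m) * (y3^2 mod m)) mod m"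
    unfolding CD_f2_def by (intro mod_add_cong mod_diff_cong mod_mult_cong) simp_all
  with assms(2) show "(y1^2 mod m - 2 * (y2^2 mod m) + (D mod m) * (y3^2 mod m)) mod m = 0"
    by (metis dvd_eq_mod_eq_0)
  have "CD_f3 D y0 y1 y2 y3 y4 mod m = (y2^2 mod m - 2 * (D mod m) * (y3^2 mod m) + y4^2 mod m) mod m"
    unfolding CD_f3_def by (intro mod_add_cong mod_diff_cong mod_mult_cong) simp_all
  with assms(3) show "(y2^2 mod m - 2 * (D mod m) * (y3^2 mod m) + y4^2 mod m) mod m = 0"
    by (metis dvd_eq_mod_eq_0)
qed

lemma CD_solution_mod_8_even:
  fixes D :: int
  assumes "D mod 8 \<notin> {0,1,4}"
    and "8 dvd CD_f1 D y0 y1 y2 y3 y4" "8 dvd CD_f2 D y0 y1 y2 y3 y4" "8 dvd CD_f3 D y0 y1 y2 y3 y4"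
  shows "even y0 \<and> even y1 \<and> even y2 \<and> even y3 \<and> even y4"
proof -
  have squares: "\<forall>d\<in>{2,3,5,6,7}. \<forall>a0\<in>{0,1,4}. \<forall>a1\<in>{0,1,4}. \<forall>a2\<in>{0,1,4::int}.
    (a0 - 2 * a1 + a2) mod 8 = 0 \<longrightarrow> (\<forall>a3\<in>{0,1,4}. (a1 - 2 * a2 + d * a3) mod 8 = 0 \<longrightarrow>
    (\<forall>a4\<in>{0,1,4}. (a2 - 2 * d * a3 + a4) mod 8 = 0 \<longrightarrow>
      a0 \<noteq> 1 \<and> a1 \<noteq> 1 \<and> a2 \<noteq> 1 \<and> a3 \<noteq> 1 \<and> a4 \<noteq> 1))"
    by simp
  have D: "D mod 8 \<in> {2,3,5,6,7}" using assms(1) by auto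
  note residues = CD_equations_mod[OF assms(2-4)] and square = square_mod_8[THEN conjunct1]
  from squares[rule_format, OF D square square square residues(1) square residues(2) square
      residues(3)]
  show ?thesis using square_mod_8 by auto
qed

lemma CD_solution_mod_3:
  fixes D :: int
  assumes "D mod 3 \<noteq> 1"
    and "3 dvd CD_f1 D y0 y1 y2 y3 y4" "3 dvd CD_f2 D y0 y1 y2 y3 y4" "3 dvd CD_f3 D y0 y1 y2 y3 y4"
  shows "3 dvd y0 \<and> 3 dvd y1 \<and> 3 dvd y2 \<and> 3 dvd y4"
proof -
  have squares: "\<forall>d\<in>{0,2}. \<forall>a0\<in>{0,1}. \<forall>a1\<in>{0,1}. \<forall>a2\<in>{0,1::int}.
    (a0 - 2 * a1 + a2) mod 3 = 0 \<longrightarrow> (\<forall>a3\<in>{0,1}. (a1 - 2 * a2 + d * a3) mod 3 = 0 \<longrightarrow>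
    (\<forall>a4\<in>{0,1}. (a2 - 2 * d * a3 + a4) mod 3 = 0 \<longrightarrow>
      a0 = 0 \<and> a1 = 0 \<and> a2 = 0 \<and> a4 = 0))"
    by simp
  have D: "D mod 3 \<in> {0,2}" using assms(1) by auto
  note residues = CD_equations_mod[OF assms(2-4)] and square = square_mod_3[THEN conjunct1]
  from squares[rule_format, OF D square square square residues(1) square residues(2) square
      residues(3)]
  show ?thesis using square_mod_3 by auto
qed

lemma CD_solution_mod_5:
  fixes D :: int
  assumes "D mod 5 \<notin> {1,4}"
    and "5 dvd CD_f1 D y0 y1 y2 y3 y4" "5 dvd CD_f2 D y0 y1 y2 y3 y4" "5 dvd CD_f3 D y0 y1 y2 y3 y4"
  shows "5 dvd y0 \<and> 5 dvd y1 \<and> 5 dvd y2 \<and> 5 dvd y4"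
proof -
  have squares: "\<forall>d\<in>{0,2,3}. \<forall>a0\<in>{0,1,4}. \<forall>a1\<in>{0,1,4}. \<forall>a2\<in>{0,1,4::int}.
    (a0 - 2 * a1 + a2) mod 5 = 0 \<longrightarrow> (\<forall>a3\<in>{0,1,4}. (a1 - 2 * a2 + d * a3) mod 5 = 0 \<longrightarrow>
    (\<forall>a4\<in>{0,1,4}. (a2 - 2 * d * a3 + a4) mod 5 = 0 \<longrightarrow>
      a0 = 0 \<and> a1 = 0 \<and> a2 = 0 \<and> a4 = 0))"
    by simp
  have D: "D mod 5 \<in> {0,2,3}" using assms(1) by auto
  note residues = CD_equations_mod[OF assms(2-4)] and square = square_mod_5[THEN conjunct1]
  from squares[rule_format, OF D square square square residues(1) square residues(2) square
      residues(3)]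
  show ?thesis using square_mod_5 by auto
qed

lemma CD_padic_point_2_iff:
  fixes D :: int
  assumes "squarefree D"
  shows "CD_padic_point 2 D \<longleftrightarrow> padic_square 2 D"
proof
  assume "CD_padic_point 2 D"
  then obtain y0 y1 y2 y3 y4 where
    "8 dvd CD_f1 D y0 y1 y2 y3 y4" "8 dvd CD_f2 D y0 y1 y2 y3 y4" "8 dvd CD_f3 D y0 y1 y2 y3 y4"
    and "\<not> (even y0 \<and> even y1 \<and> even y2 \<and> even y3 \<and> even y4)"
    using CD_padic_point_primitive_solution[of 2 D 3] by auto
  then have "D mod 8 \<in> {0,1,4}" using CD_solution_mod_8_even by blast
  moreover have "\<not> (4::int) dvd D" using squarefree_not_square_dvd[OF assms, of 2] by simp
  then have "D mod 8 \<noteq> 0" "D mod 8 \<noteq> 4" by presburger+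
  ultimately have "D mod 8 = 1" by blast
  then show "padic_square 2 D" by (rule padic_square_2)
qed (simp add: CD_padic_point_if_padic_square)

lemma no_CD_padic_point_odd_prime:
  fixes p D :: int
  assumes "squarefree D" "prime p"
    and solution_mod_p: "\<And>y0 y1 y2 y3 y4. p dvd CD_f1 D y0 y1 y2 y3 y4 \<Longrightarrow>
      p dvd CD_f2 D y0 y1 y2 y3 y4 \<Longrightarrow> p dvd CD_f3 D y0 y1 y2 y3 y4 \<Longrightarrow>
      p dvd y0 \<and> p dvd y1 \<and> p dvd y2 \<and> p dvd y4"
  shows "\<not> CD_padic_point p D"
proof
  assume "CD_padic_point p D"
  then obtain y0 y1 y2 y3 y4 where
    f: "p^2 dvd CD_f1 D y0 y1 y2 y3 y4" "p^2 dvd CD_f2 D y0 y1 y2 y3 y4" "p^2 dvd CD_f3 D y0 y1 y2 y3 y4"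
    and primitive: "\<not> (p dvd y0 \<and> p dvd y1 \<and> p dvd y2 \<and> p dvd y3 \<and> p dvd y4)"
    using CD_padic_point_primitive_solution[of p D 2] by auto
  have "p dvd p^2" by (simp add: power2_eq_square)
  then have y: "p dvd y0" "p dvd y1" "p dvd y2" "p dvd y4"
    using solution_mod_p f dvd_trans by meson+
  with primitive have "\<not> p dvd y3" by blast
  \<comment> \<open>So modulo \<open>p\<^sup>2\<close> the second equation reduces to \<open>D y\<^sub>3\<^sup>2 \<equiv> 0\<close>.\<close>
  have "p^2 dvd y1^2" "p^2 dvd y2^2" using y by (simp_all add: dvd_power_same)
  then have "p^2 dvd CD_f2 D y0 y1 y2 y3 y4 - y1^2 + 2 * y2^2" using f(2) by simp
  then have "p^2 dvd D * y3^2" by (simp add: CD_f2_def)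
  moreover have "coprime (p^2) (y3^2)" using \<open>\<not> p dvd y3\<close> assms(2) by (simp add: prime_imp_coprime)
  ultimately have "p^2 dvd D" by (simp add: coprime_dvd_mult_left_iff)
  then show False using squarefree_not_square_dvd[OF assms(1)] assms(2) prime_gt_1_int by blast
qed

lemma CD_padic_point_3_iff:
  fixes D :: int
  assumes "squarefree D"
  shows "CD_padic_point 3 D \<longleftrightarrow> padic_square 3 D"
proof
  assume point: "CD_padic_point 3 D"
  have "D mod 3 = 1"
  proof (rule ccontr)
    assume "D mod 3 \<noteq> 1"
    have "\<not> CD_padic_point 3 D"
      by (intro no_CD_padic_point_odd_prime[OF assms] CD_solution_mod_3[OF \<open>D mod 3 \<noteq> 1\<close>])
        simp_all
    then show False using point by contradiction
  qed
  then show "padic_square 3 D" using padic_square_3_iff[OF assms] by simp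
qed (simp add: CD_padic_point_if_padic_square)

lemma CD_padic_point_5_iff:
  fixes D :: int
  assumes "squarefree D"
  shows "CD_padic_point 5 D \<longleftrightarrow> padic_square 5 D"
proof
  assume point: "CD_padic_point 5 D"
  have "D mod 5 \<in> {1,4}"
  proof (rule ccontr)
    assume "D mod 5 \<notin> {1,4}"
    have "\<not> CD_padic_point 5 D"
      by (intro no_CD_padic_point_odd_prime[OF assms] CD_solution_mod_5[OF \<open>D mod 5 \<notin> {1,4}\<close>])
        simp_all
    then show False using point by contradiction
  qed
  then show "padic_square 5 D" using padic_square_5_iff[OF assms] by simp
qed (simp add: CD_padic_point_if_padic_square)

theorem lemma4p2:
  fixes D :: int
  assumes "squarefree D"
  shows "(CD_real_point D \<longleftrightarrow> real_square D) \<and> (real_square D \<longleftrightarrow> D > 0)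
    \<and> (CD_padic_point 2 D \<longleftrightarrow> padic_square 2 D) \<and> (padic_square 2 D \<longleftrightarrow> D mod 8 = 1)
    \<and> (CD_padic_point 3 D \<longleftrightarrow> padic_square 3 D) \<and> (padic_square 3 D \<longleftrightarrow> D mod 3 = 1)
    \<and> (CD_padic_point 5 D \<longleftrightarrow> padic_square 5 D)
    \<and> (padic_square 5 D \<longleftrightarrow> D mod 5 = 1 \<or> D mod 5 = 4)"
proof -
  have "D \<noteq> 0" using assms by auto
  then show ?thesis
    using CD_real_point_iff real_square_iff CD_padic_point_2_iff[OF assms] padic_square_2_iff[OF assms]
      CD_padic_point_3_iff[OF assms] padic_square_3_iff[OF assms]
      CD_padic_point_5_iff[OF assms] padic_square_5_iff[OF assms]
    by blast
qed

end
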